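(* Let $S$ be a finite state space, let $P\in\mathbb{R}^{|S|\times|S|}$ be a row-stochastic matrix, let $\gamma\in[0,1)$, $\beta\in(0,1)$, and let $R\in\mathbb{R}^{|S|}$. Let $d_\mu\in\mathbb{R}^{|S|}$ be a probability vector, and define $f$ by $f^\top = d_\mu^\top (I-\beta P)^{-1}$; assume $f(s)>0$ for all $s\in S$. Let $\kappa = \min_{s\in S} \frac{d_\mu(s)}{f(s)}$. Let $T:\mathbb{R}^{|S|}\to\mathbb{R}^{|S|}$ be $T(V)=R+\gamma P V$, and let $\Pi_f$ be the orthogonal projection, with respect to the $f$-weighted Euclidean norm $\|v\|_f=\sqrt{\sum_s f(s)v(s)^2}$, onto a fixed linear subspace of $\mathbb{R}^{|S|}$ (the span of the feature vectors). If $\beta>\gamma^2(1-\kappa)$, then for all $v_1,v_2\in\mathbb{R}^{|S|}$, $$\|\Pi_f T v_1-\Pi_f T v_2\|_f\le \sqrt{\tfrac{\gamma^2}{\beta}(1-\kappa)}\,\|v_1-v_2\|_f,$$ i.e. $\Pi_f T$ is a $\sqrt{\frac{\gamma^2}{\beta}(1-\kappa)}$-contraction in the $f$-weighted norm.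
   Context: Setting: a finite Markov decision process with target policy $\pi$ and behavior policy $\mu$; $P$ and $R$ are the transition matrix and reward vector induced by the target policy $\pi$, and $d_\mu$ is the stationary distribution over states induced by the behavior policy $\mu$. The vector $f$ is called the emphatic weight vector and $\kappa$ measures the discrepancy between target and behavior policies. The subspace onto which $\Pi_f$ projects is the span of the columns of $\Phi^\top$, where $\Phi$ is the matrix whose columns are the feature vectors $\phi(s)\in\mathbb{R}^n$. *)

theory Defs
  imports "HOL-Analysis.Analysis"
begin

text \<open>Finite state space = finite index type 's; vectors in R^|S| are real^'s,
matrices are real^'s^'s (rows indexed first).\<close>

definition row_stochastic :: "real^'s^'s \<Rightarrow> bool" where
  "row_stochastic P \<longleftrightarrow> (\<forall>i j. P $ i $ j \<ge> 0) \<and> (\<forall>i. (\<Sum>j\<in>UNIV. P $ i $ j) = 1)"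

definition prob_vector :: "real^'s \<Rightarrow> bool" where
  "prob_vector d \<longleftrightarrow> (\<forall>s. d $ s \<ge> 0) \<and> (\<Sum>s\<in>UNIV. d $ s) = 1"

definition emphatic_weight :: "real \<Rightarrow> real^'s^'s \<Rightarrow> real^'s \<Rightarrow> real^'s" where
  "emphatic_weight \<beta> P d = d v* matrix_inv (mat 1 - \<beta> *\<^sub>R P)"

definition finner :: "real^'s \<Rightarrow> real^'s \<Rightarrow> real^'s \<Rightarrow> real" where
  "finner f u v = (\<Sum>s\<in>UNIV. f $ s * u $ s * v $ s)"

definition fnorm :: "real^'s \<Rightarrow> real^'s \<Rightarrow> real" where
  "fnorm f v = sqrt (\<Sum>s\<in>UNIV. f $ s * (v $ s)\<^sup>2)"

definition fproj :: "real^'s \<Rightarrow> (real^'s) set \<Rightarrow> real^'s \<Rightarrow> real^'s" where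
  "fproj f W v = (THE p. p \<in> W \<and> (\<forall>w\<in>W. finner f (v - p) w = 0))"

definition bellman :: "real^'s \<Rightarrow> real \<Rightarrow> real^'s^'s \<Rightarrow> real^'s \<Rightarrow> real^'s" where
  "bellman R \<gamma> P V = R + \<gamma> *\<^sub>R (P *v V)"

end

theory Submission
  imports Defs
begin

text \<open>The emphatic weights satisfy \<open>f\<^sup>T P = (f - d\<^sub>\<mu>)\<^sup>T / \<beta>\<close>. Hence, by Jensen's inequality
  row by row, \<open>\<Sum>\<^sub>s f(s) (P v)(s)\<^sup>2 \<le> \<Sum>\<^sub>s (f P)(s) v(s)\<^sup>2 = \<Sum>\<^sub>s (f(s) - d\<^sub>\<mu>(s)) v(s)\<^sup>2 / \<beta>\<close>,
  and \<open>d\<^sub>\<mu> \<ge> \<kappa> f\<close> turns this into \<open>\<parallel>P v\<parallel>\<^sub>f\<^sup>2 \<le> (1 - \<kappa>)/\<beta> \<parallel>v\<parallel>\<^sub>f\<^sup>2\<close>. The affine part of \<open>T\<close>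
  cancels in differences, and the \<open>f\<close>-orthogonal projection is linear and does not increase
  \<open>\<parallel>\<cdot>\<parallel>\<^sub>f\<close>.\<close>

lemma matrix_vector_mult_one_minus_scaleR_nth:
  "((mat 1 - b *\<^sub>R P) *v (x::real^'n)) $ i = x $ i - b * (\<Sum>j\<in>UNIV. P $ i $ j * x $ j)"
proof -
  have "(mat 1 - b *\<^sub>R P) *v x = x - b *\<^sub>R (P *v x)"
    by (simp add: matrix_vector_mult_diff_rdistrib scaleR_matrix_vector_assoc)
  then show ?thesis by (simp add: matrix_vector_mult_def)
qed

lemma vector_matrix_mult_one_minus_scaleR_nth:
  "((y::real^'n) v* (mat 1 - b *\<^sub>R P)) $ j = y $ j - b * (\<Sum>i\<in>UNIV. y $ i * P $ i $ j)"
proof -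
  have "b *\<^sub>R (y v* P) = y v* (b *\<^sub>R P)"
    by (simp add: vec_eq_iff vector_matrix_mult_def sum_distrib_left algebra_simps)
  then have "y v* (mat 1 - b *\<^sub>R P) = y - b *\<^sub>R (y v* P)"
    by (simp add: algebra_simps)
  then show ?thesis by (simp add: vector_matrix_mult_def)
qed

text \<open>A kernel vector \<open>x\<close> of \<open>I - b P\<close> satisfies \<open>\<bar>x\<bar>\<^sub>\<infinity> \<le> b \<bar>x\<bar>\<^sub>\<infinity>\<close>.\<close>
lemma invertible_one_minus_scaleR_stochastic:
  fixes P :: "real^'n^'n"
  assumes P: "row_stochastic P" and b: "0 \<le> b" "b < 1"
  shows "invertible (mat 1 - b *\<^sub>R P)"
proof -
  have "x = 0" if h: "(mat 1 - b *\<^sub>R P) *v x = 0" for x :: "real^'n"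
  proof -
    define m where "m = Max (range (\<lambda>i. \<bar>x $ i\<bar>))"
    have m_ge: "\<bar>x $ i\<bar> \<le> m" for i unfolding m_def by (rule Max_ge) auto
    have bound: "\<bar>x $ i\<bar> \<le> b * m" for i
    proof -
      have xi: "x $ i = b * (\<Sum>j\<in>UNIV. P $ i $ j * x $ j)"
        using arg_cong[OF h, of "\<lambda>v. v $ i"] by (simp add: matrix_vector_mult_one_minus_scaleR_nth)
      have "\<bar>\<Sum>j\<in>UNIV. P $ i $ j * x $ j\<bar> \<le> (\<Sum>j\<in>UNIV. \<bar>P $ i $ j * x $ j\<bar>)"
        by (rule sum_abs)
      also have "\<dots> \<le> (\<Sum>j\<in>UNIV. P $ i $ j * m)"
        using P m_ge unfolding row_stochastic_def
        by (intro sum_mono) (simp add: abs_mult mult_left_mono)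
      also have "\<dots> = m"
        using P unfolding row_stochastic_def by (simp add: sum_distrib_right[symmetric])
      finally show ?thesis using xi b by (simp add: abs_mult mult_left_mono)
    qed
    have "m \<in> range (\<lambda>i. \<bar>x $ i\<bar>)" unfolding m_def by (rule Max_in) auto
    then obtain i0 where "m = \<bar>x $ i0\<bar>" by auto
    then have "m \<le> b * m" "0 \<le> m" using bound[of i0] by auto
    then have "m = 0" using b by (smt (verit) mult_le_cancel_right1)
    then show "x = 0" using m_ge by (simp add: vec_eq_iff)
  qed
  then obtain B where "B ** (mat 1 - b *\<^sub>R P) = mat 1"
    using matrix_left_invertible_ker by blast
  then show ?thesis using invertible_left_inverse by blast
qed

lemma emphatic_weight_mult_one_minus_scaleR:
  fixes P :: "real^'n^'n"
  assumes "row_stochastic P" and "0 \<le> \<beta>" "\<beta> < 1"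
  shows "emphatic_weight \<beta> P d v* (mat 1 - \<beta> *\<^sub>R P) = d"
proof -
  let ?M = "mat 1 - \<beta> *\<^sub>R P"
  have "\<exists>A. ?M ** A = mat 1 \<and> A ** ?M = mat 1"
    using invertible_one_minus_scaleR_stochastic[OF assms] invertible_def by blast
  then have "matrix_inv ?M ** ?M = mat 1"
    unfolding matrix_inv_def by (rule someI2_ex) auto
  then show ?thesis
    unfolding emphatic_weight_def by (simp add: vector_matrix_mul_assoc)
qed

lemma stochastic_row_mean_square_le:
  fixes P :: "real^'n^'n"
  assumes "row_stochastic P"
  shows "(\<Sum>j\<in>UNIV. P $ i $ j * v $ j)\<^sup>2 \<le> (\<Sum>j\<in>UNIV. P $ i $ j * (v $ j)\<^sup>2)"
proof -
  define m where "m = (\<Sum>j\<in>UNIV. P $ i $ j * v $ j)"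
  have "0 \<le> (\<Sum>j\<in>UNIV. P $ i $ j * (v $ j - m)\<^sup>2)"
    using assms unfolding row_stochastic_def by (intro sum_nonneg) auto
  also have "\<dots> = (\<Sum>j\<in>UNIV. P $ i $ j * (v $ j)\<^sup>2) - 2 * m * (\<Sum>j\<in>UNIV. P $ i $ j * v $ j)
      + m\<^sup>2 * (\<Sum>j\<in>UNIV. P $ i $ j)"
    by (simp add: power2_diff algebra_simps sum.distrib sum_subtractf sum_distrib_left)
  finally show ?thesis
    using assms unfolding row_stochastic_def m_def by (simp add: power2_eq_square)
qed

lemma fnorm_power2:
  assumes "\<forall>s. 0 \<le> f $ s"
  shows "(fnorm f v)\<^sup>2 = (\<Sum>s\<in>UNIV. f $ s * (v $ s)\<^sup>2)"
  unfolding fnorm_def using assms by (intro real_sqrt_pow2 sum_nonneg) simp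

lemma fnorm_scaleR: "fnorm f (c *\<^sub>R v) = \<bar>c\<bar> * fnorm f v"
proof -
  have "fnorm f (c *\<^sub>R v) = sqrt (c\<^sup>2 * (\<Sum>s\<in>UNIV. f $ s * (v $ s)\<^sup>2))"
    unfolding fnorm_def by (simp add: sum_distrib_left algebra_simps)
  then show ?thesis by (simp add: real_sqrt_mult fnorm_def)
qed

lemma fnorm_stochastic_mult_le:
  fixes P :: "real^'n^'n"
  assumes P: "row_stochastic P" and \<beta>: "0 < \<beta>"
    and f: "\<forall>s. 0 \<le> f $ s" and fd: "f v* (mat 1 - \<beta> *\<^sub>R P) = d"
    and \<kappa>: "\<forall>s. \<kappa> * f $ s \<le> d $ s"
  shows "fnorm f (P *v w) \<le> sqrt ((1 - \<kappa>) / \<beta>) * fnorm f w"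
proof -
  have column: "(\<Sum>i\<in>UNIV. f $ i * P $ i $ j) = (f $ j - d $ j) / \<beta>" for j
    using arg_cong[OF fd, of "\<lambda>v. v $ j"] \<beta>
    by (simp add: vector_matrix_mult_one_minus_scaleR_nth field_simps)
  have "(fnorm f (P *v w))\<^sup>2 = (\<Sum>i\<in>UNIV. f $ i * (\<Sum>j\<in>UNIV. P $ i $ j * w $ j)\<^sup>2)"
    using f by (simp add: fnorm_power2 matrix_vector_mult_def)
  also have "\<dots> \<le> (\<Sum>i\<in>UNIV. f $ i * (\<Sum>j\<in>UNIV. P $ i $ j * (w $ j)\<^sup>2))"
    using f stochastic_row_mean_square_le[OF P] by (intro sum_mono mult_left_mono) auto
  also have "\<dots> = (\<Sum>i\<in>UNIV. \<Sum>j\<in>UNIV. f $ i * P $ i $ j * (w $ j)\<^sup>2)"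
    by (simp add: sum_distrib_left mult.assoc)
  also have "\<dots> = (\<Sum>j\<in>UNIV. (\<Sum>i\<in>UNIV. f $ i * P $ i $ j) * (w $ j)\<^sup>2)"
    by (subst sum.swap) (simp add: sum_distrib_right)
  also have "\<dots> = (\<Sum>j\<in>UNIV. (f $ j - d $ j) / \<beta> * (w $ j)\<^sup>2)"
    by (simp add: column)
  also have "\<dots> \<le> (\<Sum>j\<in>UNIV. (1 - \<kappa>) / \<beta> * (f $ j * (w $ j)\<^sup>2))"
  proof (intro sum_mono)
    fix j
    have "(f $ j - d $ j) / \<beta> \<le> (1 - \<kappa>) / \<beta> * f $ j"
      using \<kappa> \<beta> by (simp add: divide_right_mono algebra_simps)
    then show "(f $ j - d $ j) / \<beta> * (w $ j)\<^sup>2 \<le> (1 - \<kappa>) / \<beta> * (f $ j * (w $ j)\<^sup>2)"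
      by (metis mult.assoc mult_right_mono zero_le_power2)
  qed
  also have "\<dots> = (1 - \<kappa>) / \<beta> * (fnorm f w)\<^sup>2"
    using f by (simp add: fnorm_power2 sum_distrib_left)
  finally have "sqrt ((fnorm f (P *v w))\<^sup>2) \<le> sqrt ((1 - \<kappa>) / \<beta> * (fnorm f w)\<^sup>2)"
    by (rule real_sqrt_le_mono)
  then have "sqrt ((fnorm f (P *v w))\<^sup>2) \<le> sqrt ((1 - \<kappa>) / \<beta>) * sqrt ((fnorm f w)\<^sup>2)"
    by (simp only: real_sqrt_mult)
  moreover have "0 \<le> fnorm f v" for v
    unfolding fnorm_def using f by (simp add: sum_nonneg)
  ultimately show ?thesis by simp
qed

lemma finner_diff_left: "finner f (u - v) w = finner f u w - finner f v w"
  unfolding finner_def by (simp add: algebra_simps sum_subtractf)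

lemma finner_add_self:
  "finner f (u + v) (u + v) = finner f u u + 2 * finner f v u + finner f v v"
  unfolding finner_def by (simp add: algebra_simps sum.distrib sum_distrib_left)

lemma fnorm_eq_sqrt_finner: "fnorm f v = sqrt (finner f v v)"
  unfolding fnorm_def finner_def by (simp add: power2_eq_square algebra_simps)

lemma finner_self_nonneg: "\<forall>s. 0 \<le> f $ s \<Longrightarrow> 0 \<le> finner f v v"
  unfolding finner_def by (intro sum_nonneg) (simp add: mult.assoc)

lemma finner_self_eq_0_iff:
  assumes "\<forall>s. 0 < f $ s"
  shows "finner f v v = 0 \<longleftrightarrow> v = 0"
proof
  assume "finner f v v = 0"
  then have "\<forall>s\<in>UNIV. f $ s * v $ s * v $ s = 0"
    using assms unfolding finner_def
    by (subst sum_nonneg_eq_0_iff[symmetric]) (auto simp: mult.assoc less_imp_le)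
  then show "v = 0" using assms by (simp add: vec_eq_iff) (metis less_irrefl)
qed (simp add: finner_def)

text \<open>Existence is transported from the Euclidean decomposition along
  \<open>u \<mapsto> (\<chi> s. \<surd>f(s) u(s))\<close>, which turns \<open>finner f\<close> into the standard inner product.\<close>
lemma fproj_exists:
  fixes f :: "real^'n"
  assumes f: "\<forall>s. 0 < f $ s" and W: "subspace W"
  shows "\<exists>p. p \<in> W \<and> (\<forall>w\<in>W. finner f (v - p) w = 0)"
proof -
  define g where "g = (\<lambda>u::real^'n. \<chi> s. sqrt (f $ s) * u $ s)"
  have g: "linear g" unfolding g_def
    by (rule linearI) (simp_all add: vec_eq_iff algebra_simps)
  have finner_g: "finner f u w = g u \<bullet> g w" for u w
    unfolding finner_def g_def inner_vec_def using f
    by (intro sum.cong) (auto simp: algebra_simps less_imp_le)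
  have span_gW: "span (g ` W) = g ` W"
    using linear_subspace_image[OF g W] by simp
  obtain y z where y: "y \<in> span (g ` W)" and z: "\<And>w. w \<in> span (g ` W) \<Longrightarrow> orthogonal z w"
    and gv: "g v = y + z"
    using orthogonal_subspace_decomp_exists[of "g ` W" "g v"] by blast
  obtain p where p: "p \<in> W" "y = g p" using y span_gW by auto
  have "finner f (v - p) w = 0" if "w \<in> W" for w
  proof -
    have "finner f (v - p) w = z \<bullet> g w"
      using finner_g linear_diff[OF g] gv p by simp
    then show ?thesis using z[of "g w"] that span_gW orthogonal_def by auto
  qed
  then show ?thesis using p by blast
qed

lemma fproj_eqI:
  assumes f: "\<forall>s. 0 < f $ s" and W: "subspace W"
    and p: "p \<in> W" "\<forall>w\<in>W. finner f (v - p) w = 0"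
  shows "fproj f W v = p"
  unfolding fproj_def
proof (rule the_equality)
  show "p \<in> W \<and> (\<forall>w\<in>W. finner f (v - p) w = 0)" using p by blast
  fix q assume q: "q \<in> W \<and> (\<forall>w\<in>W. finner f (v - q) w = 0)"
  then have "q - p \<in> W" using W p by (simp add: subspace_diff)
  have "finner f (q - p) (q - p) = finner f (v - p) (q - p) - finner f (v - q) (q - p)"
    by (simp add: finner_diff_left)
  also have "\<dots> = 0" using p q \<open>q - p \<in> W\<close> by simp
  finally have "finner f (q - p) (q - p) = 0" .
  then show "q = p" using finner_self_eq_0_iff[OF f] by simp
qed

lemma fproj_spec:
  assumes f: "\<forall>s. 0 < f $ s" and W: "subspace W"
  shows "fproj f W v \<in> W" and "\<forall>w\<in>W. finner f (v - fproj f W v) w = 0"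
proof -
  obtain p where p: "p \<in> W" "\<forall>w\<in>W. finner f (v - p) w = 0"
    using fproj_exists[OF f W] by blast
  moreover have "fproj f W v = p" using fproj_eqI[OF f W p] .
  ultimately show "fproj f W v \<in> W" and "\<forall>w\<in>W. finner f (v - fproj f W v) w = 0"
    by simp_all
qed

lemma fproj_diff:
  assumes f: "\<forall>s. 0 < f $ s" and W: "subspace W"
  shows "fproj f W a - fproj f W b = fproj f W (a - b)"
proof (rule fproj_eqI[symmetric, OF f W])
  show "fproj f W a - fproj f W b \<in> W"
    using fproj_spec[OF f W] W by (simp add: subspace_diff)
  show "\<forall>w\<in>W. finner f (a - b - (fproj f W a - fproj f W b)) w = 0"
  proof
    fix w assume "w \<in> W"
    have "a - b - (fproj f W a - fproj f W b) = (a - fproj f W a) - (b - fproj f W b)"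
      by simp
    then show "finner f (a - b - (fproj f W a - fproj f W b)) w = 0"
      using fproj_spec(2)[OF f W] \<open>w \<in> W\<close> by (simp only: finner_diff_left)
  qed
qed

lemma fnorm_fproj_le:
  assumes f: "\<forall>s. 0 < f $ s" and W: "subspace W"
  shows "fnorm f (fproj f W x) \<le> fnorm f x"
proof -
  let ?p = "fproj f W x"
  have orth: "finner f (x - ?p) ?p = 0" using fproj_spec[OF f W] by blast
  have "finner f x x = finner f (?p + (x - ?p)) (?p + (x - ?p))" by simp
  also have "\<dots> = finner f ?p ?p + 2 * finner f (x - ?p) ?p + finner f (x - ?p) (x - ?p)"
    by (rule finner_add_self)
  finally have "finner f ?p ?p \<le> finner f x x"
    using orth finner_self_nonneg[of f "x - ?p"] f by (simp add: less_imp_le)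
  then show ?thesis by (simp add: fnorm_eq_sqrt_finner)
qed

lemma bellman_diff: "bellman R \<gamma> P v\<^sub>1 - bellman R \<gamma> P v\<^sub>2 = \<gamma> *\<^sub>R (P *v (v\<^sub>1 - v\<^sub>2))"
  unfolding bellman_def by (simp add: matrix_vector_mult_diff_distrib scaleR_diff_right)

theorem theorem1:
  fixes P :: "real^'s^'s" and R d\<^sub>\<mu> :: "real^'s" and \<gamma> \<beta> :: real
    and W :: "(real^'s) set"
  assumes "row_stochastic P"
    and "0 \<le> \<gamma>" and "\<gamma> < 1"
    and "0 < \<beta>" and "\<beta> < 1"
    and "prob_vector d\<^sub>\<mu>"
    and "\<forall>s. emphatic_weight \<beta> P d\<^sub>\<mu> $ s > 0"
    and "subspace W"
    and "\<beta> > \<gamma>\<^sup>2 * (1 - (MIN s. d\<^sub>\<mu> $ s / emphatic_weight \<beta> P d\<^sub>\<mu> $ s))"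
  shows "\<forall>v\<^sub>1 v\<^sub>2.
    fnorm (emphatic_weight \<beta> P d\<^sub>\<mu>)
      (fproj (emphatic_weight \<beta> P d\<^sub>\<mu>) W (bellman R \<gamma> P v\<^sub>1)
       - fproj (emphatic_weight \<beta> P d\<^sub>\<mu>) W (bellman R \<gamma> P v\<^sub>2))
    \<le> sqrt (\<gamma>\<^sup>2 / \<beta> * (1 - (MIN s. d\<^sub>\<mu> $ s / emphatic_weight \<beta> P d\<^sub>\<mu> $ s)))
       * fnorm (emphatic_weight \<beta> P d\<^sub>\<mu>) (v\<^sub>1 - v\<^sub>2)"
proof (intro allI)
  fix v\<^sub>1 v\<^sub>2 :: "real^'s"
  let ?f = "emphatic_weight \<beta> P d\<^sub>\<mu>"
  let ?\<kappa> = "MIN s. d\<^sub>\<mu> $ s / ?f $ s"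
  note f = assms(7) and W = assms(8)
  have "?\<kappa> \<le> d\<^sub>\<mu> $ s / ?f $ s" for s by (rule Min_le) auto
  then have \<kappa>: "\<forall>s. ?\<kappa> * ?f $ s \<le> d\<^sub>\<mu> $ s" using f by (simp add: pos_le_divide_eq)
  have fd: "?f v* (mat 1 - \<beta> *\<^sub>R P) = d\<^sub>\<mu>"
    using emphatic_weight_mult_one_minus_scaleR[OF assms(1) _ assms(5)] assms(4) by simp
  have "fnorm ?f (fproj ?f W (bellman R \<gamma> P v\<^sub>1) - fproj ?f W (bellman R \<gamma> P v\<^sub>2))
      = fnorm ?f (fproj ?f W (\<gamma> *\<^sub>R (P *v (v\<^sub>1 - v\<^sub>2))))"
    by (simp add: fproj_diff[OF f W] bellman_diff)
  also have "\<dots> \<le> fnorm ?f (\<gamma> *\<^sub>R (P *v (v\<^sub>1 - v\<^sub>2)))"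
    by (rule fnorm_fproj_le[OF f W])
  also have "\<dots> = \<gamma> * fnorm ?f (P *v (v\<^sub>1 - v\<^sub>2))"
    using assms(2) by (simp add: fnorm_scaleR)
  also have "\<dots> \<le> \<gamma> * (sqrt ((1 - ?\<kappa>) / \<beta>) * fnorm ?f (v\<^sub>1 - v\<^sub>2))"
    using fnorm_stochastic_mult_le[OF assms(1,4) _ fd \<kappa>] f assms(2)
    by (simp add: less_imp_le mult_left_mono)
  also have "\<dots> = sqrt (\<gamma>\<^sup>2 * ((1 - ?\<kappa>) / \<beta>)) * fnorm ?f (v\<^sub>1 - v\<^sub>2)"
    using assms(2) by (simp only: real_sqrt_mult real_sqrt_abs abs_of_nonneg mult.assoc)
  also have "\<dots> = sqrt (\<gamma>\<^sup>2 / \<beta> * (1 - ?\<kappa>)) * fnorm ?f (v\<^sub>1 - v\<^sub>2)"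
    by simp
  finally show "fnorm ?f (fproj ?f W (bellman R \<gamma> P v\<^sub>1) - fproj ?f W (bellman R \<gamma> P v\<^sub>2))
      \<le> sqrt (\<gamma>\<^sup>2 / \<beta> * (1 - ?\<kappa>)) * fnorm ?f (v\<^sub>1 - v\<^sub>2)" .
qed

end
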